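(* Let $K\subseteq\mathcal I_{int}$ be finite and let $A=(Q,\mathsf{init},2^{\Sigma\cup K\cup\{\mathsf{anch}\}},\delta,F)$ be an NFA whose language $L(A)$ consists of collapsed $K$-interval words over $\Sigma$. Then for every type $\mathsf{seq}$ over $K$, $L(A_{\mathsf{seq}})=\mathsf{Norm}(L(A)\cap W_{\mathsf{seq}})$. Consequently $\bigcup_{\mathsf{seq}}L(A_{\mathsf{seq}})=\mathsf{Norm}(L(A))$, the union ranging over all types over $K$.
   Context: Fix a finite set $\Sigma$ of propositions; $\mathcal I_{int}$ is the set of open, half-open or closed real intervals with endpoints in $\mathbb Z\cup\{-\infty,\infty\}$. Interval words: for finite $K\subseteq\mathcal I_{int}$ and a fresh symbol $\mathsf{anch}$, a $K$-interval word over $\Sigma$ is a finite word $w=a_1\cdots a_n$ with $a_j\subseteq\Sigma\cup K\cup\{\mathsf{anch}\}$ such that exactly one position $i$, denoted $\mathsf{anch}(w)$, has $\mathsf{anch}\in a_i$, and $a_i\subseteq\Sigma\cup\{\mathsf{anch}\}$ there. Position $j$ is $I$-time restricted iff $I\in a_j$. $w$ is collapsed iff every $a_j$ contains at most one element of $K$. $\mathsf{first}(w,I)$, $\mathsf{last}(w,I)$ are the least and greatest $I$-time restricted positions ($\bot$ if none). For a collapsed $K$-interval word $w$, $\mathsf{Norm}(w)$ is the $K$-interval word $b_1\cdots b_n$ with $b_j\cap(\Sigma\cup\{\mathsf{anch}\})=a_j\cap(\Sigma\cup\{\mathsf{anch}\})$ and, for $I\in K$, $I\in b_j$ iff $j\in\{\mathsf{first}(w,I),\mathsf{last}(w,I)\}$;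 for a set $L$ of words, $\mathsf{Norm}(L)=\{\mathsf{Norm}(w):w\in L\}$. Types: for a collapsed $K$-interval word $w$, let $\mathsf{Boundary}(w)$ be the set of positions that are $\mathsf{anch}(w)$ or equal to $\mathsf{first}(w,I)$ or $\mathsf{last}(w,I)$ for some $I\in K$; listing them as $p_1<\dots<p_m$, the type of $w$ is the word $c_1\cdots c_m$ over $K\cup\{\mathsf{anch}\}$ where $c_k$ is the unique element of $a_{p_k}\setminus\Sigma$. A type over $K$ is any word over $K\cup\{\mathsf{anch}\}$ arising this way (it contains $\mathsf{anch}$ exactly once and each $I\in K$ at most twice). $W_{\mathsf{seq}}$ is the set of collapsed $K$-interval words of type $\mathsf{seq}$. The automaton $A_{\mathsf{seq}}$: for $A$ as in the claim and a type $\mathsf{seq}=c_1\cdots c_m$, $A_{\mathsf{seq}}=(Q\times\{1,\dots,m+1\},(\mathsf{init},1),2^{\Sigma\cup K\cup\{\mathsf{anch}\}},\delta_{\mathsf{seq}},F\times\{m+1\})$ where, for $q\in Q$ and a letter $S$: for $1\le i\le m$, (i) if $c_i\in S$ then $\delta_{\mathsf{seq}}((q,i),S)=\delta(q,S)\times\{i+1\}$; (ii) if $c_i\notin S$ and $S\not\subseteq\Sigma$ then $\delta_{\mathsf{seq}}((q,i),S)=\emptyset$; (iii) if $S\subseteq\Sigma$ then $\delta_{\mathsf{seq}}((q,i),S)=\big(\delta(q,S)\cup\bigcup_{I'\in K_i}\delta(q,S\cup\{I'\})\big)\times\{i\}$, where $K_i=\{I'\in K:\exists i'<i\le i''\text{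 with }c_{i'}=c_{i''}=I'\}$; and $\delta_{\mathsf{seq}}((q,m+1),S)=\delta(q,S)\times\{m+1\}$ if $S\subseteq\Sigma$ and $\emptyset$ otherwise. *)

theory Defs
  imports Main "HOL.Real"
begin

datatype 'p sym = Prop 'p | Itv "real set" | Anch

text \<open>Lower/upper bounds: None = infinite endpoint; bool = closed endpoint.\<close>
fun lower_ok :: "int option \<Rightarrow> bool \<Rightarrow> real \<Rightarrow> bool" where
  "lower_ok None _ x = True"
| "lower_ok (Some a) c x = (if c then real_of_int a \<le> x else real_of_int a < x)"

fun upper_ok :: "int option \<Rightarrow> bool \<Rightarrow> real \<Rightarrow> bool" where
  "upper_ok None _ x = True"
| "upper_ok (Some b) c x = (if c then x \<le> real_of_int b else x < real_of_int b)"

definition I_int :: "real set set" where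
  "I_int = {S. \<exists>l u lc uc. S = {x. lower_ok l lc x \<and> upper_ok u uc x}}"

definition alphabet :: "'p set \<Rightarrow> real set set \<Rightarrow> 'p sym set set" where
  "alphabet Sig K = Pow (Prop ` Sig \<union> Itv ` K \<union> {Anch})"

fun reach :: "('q \<Rightarrow> 'a \<Rightarrow> 'q set) \<Rightarrow> 'q \<Rightarrow> 'a list \<Rightarrow> 'q set" where
  "reach \<delta> q [] = {q}"
| "reach \<delta> q (a # w) = (\<Union>q'\<in>\<delta> q a. reach \<delta> q' w)"

definition is_nfa :: "'q set \<Rightarrow> 'q \<Rightarrow> 'a set \<Rightarrow> ('q \<Rightarrow> 'a \<Rightarrow> 'q set) \<Rightarrow> 'q set \<Rightarrow> bool" where
  "is_nfa Q init Alph \<delta> F \<longleftrightarrow> finite Q \<and> init \<in> Q \<and> F \<subseteq> Q \<and> (\<forall>q\<in>Q. \<forall>S\<in>Alph. \<delta> q S \<subseteq> Q)"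

definition lang :: "'a set \<Rightarrow> 'q \<Rightarrow> ('q \<Rightarrow> 'a \<Rightarrow> 'q set) \<Rightarrow> 'q set \<Rightarrow> 'a list set" where
  "lang Alph init \<delta> F = {w. w \<in> lists Alph \<and> reach \<delta> init w \<inter> F \<noteq> {}}"

text \<open>Interval words (positions are 0-indexed list positions).\<close>
definition interval_word :: "'p set \<Rightarrow> real set set \<Rightarrow> 'p sym set list \<Rightarrow> bool" where
  "interval_word Sig K w \<longleftrightarrow>
     (\<forall>a\<in>set w. a \<subseteq> Prop ` Sig \<union> Itv ` K \<union> {Anch}) \<and>
     (\<exists>!i. i < length w \<and> Anch \<in> w ! i) \<and>
     (\<forall>i<length w. Anch \<in> w ! i \<longrightarrow> w ! i \<subseteq> Prop ` Sig \<union> {Anch})"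

definition anch_pos :: "'p sym set list \<Rightarrow> nat" where
  "anch_pos w = (THE i. i < length w \<and> Anch \<in> w ! i)"

definition collapsed :: "real set set \<Rightarrow> 'p sym set list \<Rightarrow> bool" where
  "collapsed K w \<longleftrightarrow> (\<forall>i<length w. \<forall>I\<in>K. \<forall>J\<in>K. Itv I \<in> w ! i \<and> Itv J \<in> w ! i \<longrightarrow> I = J)"

definition cw :: "'p set \<Rightarrow> real set set \<Rightarrow> 'p sym set list \<Rightarrow> bool" where
  "cw Sig K w \<longleftrightarrow> interval_word Sig K w \<and> collapsed K w"

definition first_pos :: "'p sym set list \<Rightarrow> real set \<Rightarrow> nat option" where
  "first_pos w I = (if \<exists>j<length w. Itv I \<in> w ! j
     then Some (LEAST j. j < length w \<and> Itv I \<in> w ! j) else None)"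

definition last_pos :: "'p sym set list \<Rightarrow> real set \<Rightarrow> nat option" where
  "last_pos w I = (if \<exists>j<length w. Itv I \<in> w ! j
     then Some (GREATEST j. j < length w \<and> Itv I \<in> w ! j) else None)"

definition Norm :: "'p set \<Rightarrow> real set set \<Rightarrow> 'p sym set list \<Rightarrow> 'p sym set list" where
  "Norm Sig K w = map (\<lambda>j. (w ! j \<inter> (Prop ` Sig \<union> {Anch})) \<union>
       {Itv I | I. I \<in> K \<and> (first_pos w I = Some j \<or> last_pos w I = Some j)}) [0..<length w]"

definition Boundary :: "real set set \<Rightarrow> 'p sym set list \<Rightarrow> nat set" where
  "Boundary K w = {anch_pos w} \<union> {j. \<exists>I\<in>K. first_pos w I = Some j \<or> last_pos w I = Some j}"

definition wtype :: "'p set \<Rightarrow> real set set \<Rightarrow> 'p sym set list \<Rightarrow> 'p sym list" where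
  "wtype Sig K w = map (\<lambda>p. THE c. c \<in> w ! p - Prop ` Sig) (sorted_list_of_set (Boundary K w))"

definition is_type :: "'p set \<Rightarrow> real set set \<Rightarrow> 'p sym list \<Rightarrow> bool" where
  "is_type Sig K seq \<longleftrightarrow> (\<exists>w. cw Sig K w \<and> wtype Sig K w = seq)"

definition W_seq :: "'p set \<Rightarrow> real set set \<Rightarrow> 'p sym list \<Rightarrow> 'p sym set list set" where
  "W_seq Sig K seq = {w. cw Sig K w \<and> wtype Sig K w = seq}"

text \<open>K_i, with 1-indexed positions i into seq = c_1 ... c_m.\<close>
definition Kset :: "real set set \<Rightarrow> 'p sym list \<Rightarrow> nat \<Rightarrow> real set set" where
  "Kset K seq i = {I\<in>K. \<exists>i' i''. 1 \<le> i' \<and> i' < i \<and> i \<le> i'' \<and> i'' \<le> length seq \<and>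
       seq ! (i' - 1) = Itv I \<and> seq ! (i'' - 1) = Itv I}"

definition delta_seq :: "'p set \<Rightarrow> real set set \<Rightarrow> ('q \<Rightarrow> 'p sym set \<Rightarrow> 'q set) \<Rightarrow> 'p sym list
     \<Rightarrow> 'q \<times> nat \<Rightarrow> 'p sym set \<Rightarrow> ('q \<times> nat) set" where
  "delta_seq Sig K \<delta> seq qi S = (case qi of (q, i) \<Rightarrow>
     (let m = length seq in
      if 1 \<le> i \<and> i \<le> m then
        (if seq ! (i - 1) \<in> S then \<delta> q S \<times> {i + 1}
         else if \<not> S \<subseteq> Prop ` Sig then {}
         else (\<delta> q S \<union> (\<Union>I\<in>Kset K seq i. \<delta> q (S \<union> {Itv I}))) \<times> {i})
      else if i = m + 1 then (if S \<subseteq> Prop ` Sig then \<delta> q S \<times> {m + 1} else {})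
      else {}))"

end

theory Submission
  imports Defs
begin

text \<open>A run of A_seq on \<open>u\<close> simulates a run of A on a word \<open>w\<close>: in phase \<open>i\<close> it either
  reads a letter containing the next symbol \<open>c\<^sub>i\<close> of \<open>seq\<close> and advances to phase \<open>i + 1\<close>, or
  reads a purely propositional letter, to which A may add an interval whose two occurrences in
  \<open>seq\<close> enclose the current phase. The positions where the phase advances carry \<open>c\<^sub>1 \<dots> c\<^sub>m\<close>
  in order. Since a type contains no proposition and no interval three times, these positions
  are exactly the boundary positions of \<open>w\<close>; hence \<open>w\<close> has type \<open>seq\<close> and \<open>u = Norm w\<close>.
  Conversely, for \<open>w\<close> of type \<open>seq\<close>, taking as phase at position \<open>p\<close> one plus the number of
  boundary positions before \<open>p\<close> turns an accepting run of A on \<open>w\<close> into one of A_seq on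
  \<open>Norm w\<close>.\<close>

lemma nth_sorted_list_of_set_card_less:
  fixes A :: "nat set"
  assumes "finite A" "p \<in> A"
  shows "sorted_list_of_set A ! card {q\<in>A. q < p} = p"
proof -
  define L where "L = sorted_list_of_set A"
  have sorted: "sorted_wrt (<) L" and dist: "distinct L" and set_L: "set L = A"
    using assms(1) by (auto simp: L_def strict_sorted_list_of_set)
  obtain k where k: "k < length L" "L ! k = p"
    using assms(2) set_L by (metis in_set_conv_nth)
  have "{q\<in>A. q < p} = (\<lambda>j. L ! j) ` {..<k}"
  proof (intro equalityI subsetI)
    fix q assume q: "q \<in> {q\<in>A. q < p}"
    then obtain j where j: "j < length L" "L ! j = q"
      using set_L by (metis mem_Collect_eq in_set_conv_nth)
    have "j \<noteq> k" using j k q by auto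
    moreover have "\<not> k < j" using sorted_wrt_nth_less[OF sorted, of k j] j k q by auto
    ultimately have "j < k" by simp
    then show "q \<in> (\<lambda>j. L ! j) ` {..<k}" using j by auto
  next
    fix q assume "q \<in> (\<lambda>j. L ! j) ` {..<k}"
    then show "q \<in> {q\<in>A. q < p}"
      using k set_L sorted_wrt_nth_less[OF sorted] by auto
  qed
  moreover have "inj_on (\<lambda>j. L ! j) {..<k}"
    using dist k(1) by (auto simp: inj_on_def nth_eq_iff_index_eq)
  ultimately show ?thesis using k by (simp add: card_image L_def)
qed

lemma counter_eq_card_increments:
  fixes ix :: "nat \<Rightarrow> nat"
  assumes "\<And>q. q < p \<Longrightarrow> ix (Suc q) = ix q \<or> ix (Suc q) = Suc (ix q)"
  shows "ix p = ix 0 + card {q. q < p \<and> ix (Suc q) = Suc (ix q)}"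
  using assms
proof (induction p)
  case 0
  show ?case by simp
next
  case (Suc p)
  have IH: "ix p = ix 0 + card {q. q < p \<and> ix (Suc q) = Suc (ix q)}" using Suc by simp
  show ?case
  proof (cases "ix (Suc p) = Suc (ix p)")
    case True
    then have "{q. q < Suc p \<and> ix (Suc q) = Suc (ix q)} = insert p {q. q < p \<and> ix (Suc q) = Suc (ix q)}"
      by auto
    then show ?thesis using IH True by simp
  next
    case False
    then have "{q. q < Suc p \<and> ix (Suc q) = Suc (ix q)} = {q. q < p \<and> ix (Suc q) = Suc (ix q)}"
      using less_Suc_eq by auto
    then show ?thesis using IH False Suc.prems[of p] by simp
  qed
qed

lemma exists_unit_step_through:
  fixes ix :: "nat \<Rightarrow> nat"
  assumes "ix 0 \<le> k" "k < ix n" "\<And>p. p < n \<Longrightarrow> ix (Suc p) \<le> Suc (ix p)"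
  shows "\<exists>q<n. ix q = k \<and> ix (Suc q) = Suc k"
  using assms
proof (induction n)
  case 0
  then show ?case by simp
next
  case (Suc n)
  show ?case
  proof (cases "k < ix n")
    case True
    then show ?thesis using Suc by (metis less_SucI)
  next
    case False
    then have "ix n = k" "ix (Suc n) = Suc k" using Suc.prems(2) Suc.prems(3)[of n] by auto
    then show ?thesis by blast
  qed
qed

lemma reach_product_iff:
  fixes \<delta>' :: "'q \<times> 'i \<Rightarrow> 'a \<Rightarrow> ('q \<times> 'i) set" and \<delta> :: "'q \<Rightarrow> 'b \<Rightarrow> 'q set"
  assumes step: "\<And>q i q' i' a. (q', i') \<in> \<delta>' (q, i) a \<longleftrightarrow> (\<exists>b. q' \<in> \<delta> q b \<and> R i i' a b)"
  shows "(q', j) \<in> reach \<delta>' (q, i) u \<longleftrightarrow>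
    (\<exists>w ix. length w = length u \<and> ix 0 = i \<and> ix (length u) = j \<and>
       (\<forall>p<length u. R (ix p) (ix (Suc p)) (u ! p) (w ! p)) \<and> q' \<in> reach \<delta> q w)"
proof (induction u arbitrary: q i)
  case Nil
  show ?case by (auto intro!: exI[of _ "\<lambda>_. i"])
next
  case (Cons a u)
  show ?case
  proof
    assume "(q', j) \<in> reach \<delta>' (q, i) (a # u)"
    then obtain q1 i1 b where b: "q1 \<in> \<delta> q b" "R i i1 a b"
      and "(q', j) \<in> reach \<delta>' (q1, i1) u"
      using step by fastforce
    then obtain w ix where w: "length w = length u" "ix 0 = i1" "ix (length u) = j"
      "\<forall>p<length u. R (ix p) (ix (Suc p)) (u ! p) (w ! p)" "q' \<in> reach \<delta> q1 w"
      using Cons.IH by blast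
    define ix' where "ix' p = (case p of 0 \<Rightarrow> i | Suc p' \<Rightarrow> ix p')" for p
    have "\<forall>p<length (a # u). R (ix' p) (ix' (Suc p)) ((a # u) ! p) ((b # w) ! p)"
      using b w by (auto simp: ix'_def nth_Cons split: nat.split)
    moreover have "q' \<in> reach \<delta> q (b # w)" using b w by auto
    ultimately show "\<exists>w ix. length w = length (a # u) \<and> ix 0 = i \<and> ix (length (a # u)) = j \<and>
        (\<forall>p<length (a # u). R (ix p) (ix (Suc p)) ((a # u) ! p) (w ! p)) \<and> q' \<in> reach \<delta> q w"
      using w by (intro exI[of _ "b # w"] exI[of _ ix']) (simp add: ix'_def)
  next
    assume "\<exists>w ix. length w = length (a # u) \<and> ix 0 = i \<and> ix (length (a # u)) = j \<and>
        (\<forall>p<length (a # u). R (ix p) (ix (Suc p)) ((a # u) ! p) (w ! p)) \<and> q' \<in> reach \<delta> q w"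
    then obtain w ix where w: "length w = Suc (length u)" "ix 0 = i" "ix (Suc (length u)) = j"
      "\<forall>p<Suc (length u). R (ix p) (ix (Suc p)) ((a # u) ! p) (w ! p)" "q' \<in> reach \<delta> q w"
      by auto
    then obtain b w' where bw: "w = b # w'" by (cases w) auto
    then obtain q1 where q1: "q1 \<in> \<delta> q b" "q' \<in> reach \<delta> q1 w'" using w(5) by auto
    have "R i (ix 1) a b" using w(2,4) bw by force
    then have "(q1, ix 1) \<in> \<delta>' (q, i) a" using step q1(1) by blast
    moreover have "(q', j) \<in> reach \<delta>' (q1, ix 1) u"
      unfolding Cons.IH using w bw q1 by (intro exI[of _ w'] exI[of _ "\<lambda>p. ix (Suc p)"]) auto
    ultimately show "(q', j) \<in> reach \<delta>' (q, i) (a # u)" by auto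
  qed
qed

definition marker :: "'p set \<Rightarrow> 'p sym set list \<Rightarrow> nat \<Rightarrow> 'p sym" where
  "marker Sig w p = (THE c. c \<in> w ! p - Prop ` Sig)"

lemma wtype_eq_map_marker:
  "wtype Sig K w = map (marker Sig w) (sorted_list_of_set (Boundary K w))"
  by (simp add: wtype_def marker_def)

lemma cw_nth_subset:
  "cw Sig K w \<Longrightarrow> p < length w \<Longrightarrow> w ! p \<subseteq> Prop ` Sig \<union> Itv ` K \<union> {Anch}"
  unfolding cw_def interval_word_def by (meson nth_mem)

lemma cw_non_Prop_unique:
  assumes "cw Sig K w" "p < length w" "x \<in> w ! p" "y \<in> w ! p" "x \<notin> Prop ` Sig" "y \<notin> Prop ` Sig"
  shows "x = y"
proof -
  have "x \<in> Itv ` K \<union> {Anch}" "y \<in> Itv ` K \<union> {Anch}"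
    using cw_nth_subset[OF assms(1,2)] assms(3-6) by auto
  moreover have "Anch \<in> w ! p \<Longrightarrow> w ! p \<subseteq> Prop ` Sig \<union> {Anch}"
    using assms(1,2) unfolding cw_def interval_word_def by blast
  moreover have "\<And>I J. I \<in> K \<Longrightarrow> J \<in> K \<Longrightarrow> Itv I \<in> w ! p \<Longrightarrow> Itv J \<in> w ! p \<Longrightarrow> I = J"
    using assms(1,2) unfolding cw_def collapsed_def by blast
  ultimately show ?thesis using assms(3,4) by auto
qed

lemma marker_eqI:
  assumes "cw Sig K w" "p < length w" "x \<in> w ! p" "x \<notin> Prop ` Sig"
  shows "marker Sig w p = x"
  unfolding marker_def
  using assms cw_non_Prop_unique[OF assms(1,2)] by (intro the_equality) auto

lemma
  assumes "cw Sig K w"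
  shows anch_pos_less_length: "anch_pos w < length w"
    and Anch_in_anch_pos: "Anch \<in> w ! anch_pos w"
    and anch_pos_unique: "p < length w \<Longrightarrow> Anch \<in> w ! p \<Longrightarrow> p = anch_pos w"
proof -
  have ex1: "\<exists>!i. i < length w \<and> Anch \<in> w ! i"
    using assms unfolding cw_def interval_word_def by blast
  show "anch_pos w < length w" "Anch \<in> w ! anch_pos w"
    unfolding anch_pos_def using theI'[OF ex1] by auto
  show "p < length w \<Longrightarrow> Anch \<in> w ! p \<Longrightarrow> p = anch_pos w"
    unfolding anch_pos_def using the1_equality[OF ex1] by auto
qed

lemma cw_Itv_notin_anch_pos:
  assumes "cw Sig K w" shows "Itv I \<notin> w ! anch_pos w"
  using assms anch_pos_less_length[OF assms] Anch_in_anch_pos[OF assms]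
  unfolding cw_def interval_word_def by blast

lemma first_pos_SomeD:
  assumes "first_pos w I = Some j"
  shows "j < length w" "Itv I \<in> w ! j" "j' < j \<Longrightarrow> Itv I \<notin> w ! j'"
proof -
  have ex: "\<exists>j<length w. Itv I \<in> w ! j" and j: "j = (LEAST j. j < length w \<and> Itv I \<in> w ! j)"
    using assms unfolding first_pos_def by (auto split: if_splits)
  show "j < length w" "Itv I \<in> w ! j" using LeastI_ex[OF ex] j by auto
  show "j' < j \<Longrightarrow> Itv I \<notin> w ! j'" using j \<open>j < length w\<close> not_less_Least by fastforce
qed

lemma first_pos_exists_le:
  assumes "j < length w" "Itv I \<in> w ! j"
  shows "\<exists>f. first_pos w I = Some f \<and> f \<le> j"
  using assms unfolding first_pos_def by (auto intro: Least_le)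

lemma last_pos_SomeD:
  assumes "last_pos w I = Some j"
  shows "j < length w" "Itv I \<in> w ! j" "j < j' \<Longrightarrow> j' < length w \<Longrightarrow> Itv I \<notin> w ! j'"
proof -
  have ex: "\<exists>j<length w. Itv I \<in> w ! j" and j: "j = (GREATEST j. j < length w \<and> Itv I \<in> w ! j)"
    using assms unfolding last_pos_def by (auto split: if_splits)
  show "j < length w" "Itv I \<in> w ! j"
    using j ex GreatestI_nat[where b = "length w"] by (metis (mono_tags, lifting) less_imp_le)+
  show "j < j' \<Longrightarrow> j' < length w \<Longrightarrow> Itv I \<notin> w ! j'"
    using j Greatest_le_nat[where b = "length w"] by (metis (mono_tags, lifting) leD less_imp_le)
qed

lemma last_pos_exists_ge:
  assumes "j < length w" "Itv I \<in> w ! j"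
  shows "\<exists>l. last_pos w I = Some l \<and> j \<le> l"
  using assms unfolding last_pos_def by (auto intro: Greatest_le_nat[where b = "length w"])

lemma BoundaryE:
  assumes "p \<in> Boundary K w"
  obtains "p = anch_pos w"
    | I where "I \<in> K" "first_pos w I = Some p \<or> last_pos w I = Some p"
  using assms unfolding Boundary_def by blast

lemma Boundary_subset_lessThan: "cw Sig K w \<Longrightarrow> Boundary K w \<subseteq> {..<length w}"
  by (auto elim!: BoundaryE dest: first_pos_SomeD(1) last_pos_SomeD(1) anch_pos_less_length)

lemma finite_Boundary: "cw Sig K w \<Longrightarrow> finite (Boundary K w)"
  using Boundary_subset_lessThan finite_lessThan finite_subset by metis

lemma marker_Boundary:
  assumes "cw Sig K w" "p \<in> Boundary K w"
  shows "marker Sig w p \<in> w ! p" "marker Sig w p \<notin> Prop ` Sig"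
proof -
  have p: "p < length w" using Boundary_subset_lessThan[OF assms(1)] assms(2) by auto
  obtain x where "x \<in> w ! p" "x \<notin> Prop ` Sig"
    using assms(2)
  proof (cases rule: BoundaryE)
    case 1
    then show ?thesis using that Anch_in_anch_pos[OF assms(1)] by blast
  next
    case (2 I)
    then show ?thesis using that first_pos_SomeD(2) last_pos_SomeD(2) by blast
  qed
  with marker_eqI[OF assms(1) p] show "marker Sig w p \<in> w ! p" "marker Sig w p \<notin> Prop ` Sig"
    by auto
qed

lemma length_Norm [simp]: "length (Norm Sig K w) = length w"
  by (simp add: Norm_def)

lemma nth_Norm:
  "p < length w \<Longrightarrow> Norm Sig K w ! p = (w ! p \<inter> (Prop ` Sig \<union> {Anch})) \<union>
     {Itv I | I. I \<in> K \<and> (first_pos w I = Some p \<or> last_pos w I = Some p)}"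
  by (simp add: Norm_def)

lemma Norm_nth_Boundary:
  assumes "cw Sig K w" "p \<in> Boundary K w"
  shows "Norm Sig K w ! p = w ! p"
proof -
  have p: "p < length w" using Boundary_subset_lessThan[OF assms(1)] assms(2) by auto
  have "x \<in> Norm Sig K w ! p" if x: "x \<in> w ! p" "x \<notin> Prop ` Sig \<union> {Anch}" for x
  proof -
    obtain I where I: "x = Itv I" "I \<in> K" using cw_nth_subset[OF assms(1) p] x by auto
    have x_marker: "x = marker Sig w p" using marker_eqI[OF assms(1) p x(1)] x(2) by simp
    from assms(2) have "first_pos w I = Some p \<or> last_pos w I = Some p"
    proof (cases rule: BoundaryE)
      case 1
      then show ?thesis using cw_Itv_notin_anch_pos[OF assms(1)] x I by simp
    next
      case (2 J)
      then have "marker Sig w p = Itv J"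
        using marker_eqI[OF assms(1) p] first_pos_SomeD(2) last_pos_SomeD(2) by blast
      then show ?thesis using 2 x_marker I by simp
    qed
    then show ?thesis using nth_Norm[OF p] I by auto
  qed
  moreover have "Norm Sig K w ! p \<subseteq> w ! p"
    using nth_Norm[OF p] first_pos_SomeD(2) last_pos_SomeD(2) by fastforce
  ultimately show ?thesis using nth_Norm[OF p] by blast
qed

lemma Norm_nth_not_Boundary:
  assumes "cw Sig K w" "p < length w" "p \<notin> Boundary K w"
  shows "Norm Sig K w ! p = w ! p \<inter> Prop ` Sig"
proof -
  have "Anch \<notin> w ! p"
    using assms anch_pos_unique[OF assms(1,2)] unfolding Boundary_def by auto
  then show ?thesis using assms(3) nth_Norm[OF assms(2)] unfolding Boundary_def by auto
qed

lemma Norm_in_lists: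
  assumes "cw Sig K w" shows "Norm Sig K w \<in> lists (alphabet Sig K)"
proof -
  have "Norm Sig K w ! p \<in> alphabet Sig K" if "p < length w" for p
    using cw_nth_subset[OF assms that] nth_Norm[OF that, of Sig K] unfolding alphabet_def by auto
  then show ?thesis by (auto simp: in_set_conv_nth)
qed

lemma is_type_not_Prop:
  assumes "is_type Sig K seq" "c \<in> set seq" shows "c \<notin> Prop ` Sig"
proof -
  obtain w where w: "cw Sig K w" "wtype Sig K w = seq"
    using assms(1) unfolding is_type_def by blast
  then obtain p where "p \<in> Boundary K w" "c = marker Sig w p"
    using assms(2) finite_Boundary[OF w(1)] by (auto simp: wtype_eq_map_marker)
  then show ?thesis using marker_Boundary(2)[OF w(1)] by simp
qed

lemma is_type_Itv_at_most_twice: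
  assumes "is_type Sig K seq" "a < b" "b < c" "c < length seq"
    and "seq ! a = Itv I" "seq ! c = Itv I"
  shows "seq ! b \<noteq> Itv I"
proof
  assume b: "seq ! b = Itv I"
  obtain w where w: "cw Sig K w" "wtype Sig K w = seq"
    using assms(1) unfolding is_type_def by blast
  define L where "L = sorted_list_of_set (Boundary K w)"
  have fin: "finite (Boundary K w)" using finite_Boundary[OF w(1)] .
  have sorted: "sorted_wrt (<) L" using fin by (simp add: L_def strict_sorted_list_of_set)
  have seq_eq: "seq = map (marker Sig w) L" using w(2) by (simp add: wtype_eq_map_marker L_def)
  have in_Boundary: "L ! k \<in> Boundary K w" if "k < length seq" for k
    using that fin seq_eq by (metis L_def length_map nth_mem set_sorted_list_of_set)
  have Itv_at: "Itv I \<in> w ! (L ! k)" if "k < length seq" "seq ! k = Itv I" for k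
    using marker_Boundary(1)[OF w(1) in_Boundary[OF that(1)]] that seq_eq by simp
  have lt: "L ! a < L ! b" "L ! b < L ! c"
    using sorted_wrt_nth_less[OF sorted] assms(2-4) seq_eq by auto
  have c_len: "L ! c < length w"
    using Boundary_subset_lessThan[OF w(1)] in_Boundary[OF assms(4)] by auto
  have b_len: "b < length seq" using assms(3,4) by simp
  from in_Boundary[OF b_len] show False
  proof (cases rule: BoundaryE)
    case 1
    then show False using cw_Itv_notin_anch_pos[OF w(1)] Itv_at[OF b_len b] by simp
  next
    case (2 J)
    have "Itv J \<in> w ! (L ! b)" using 2(2) first_pos_SomeD(2) last_pos_SomeD(2) by blast
    then have "J = I"
      using cw_non_Prop_unique[OF w(1) _ Itv_at[OF b_len b]] c_len lt(2) by auto
    then show False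
      using 2(2) first_pos_SomeD(3) last_pos_SomeD(3) lt c_len
        Itv_at[OF _ assms(5)] Itv_at[OF assms(4,6)] assms(2-4) by fastforce
  qed
qed

text \<open>One step of A_seq: reading \<open>a\<close> in phase \<open>i\<close>, it lets A read \<open>b\<close> and moves to phase \<open>i'\<close>.\<close>
definition seq_guess :: "'p set \<Rightarrow> real set set \<Rightarrow> 'p sym list \<Rightarrow> nat \<Rightarrow> nat
    \<Rightarrow> 'p sym set \<Rightarrow> 'p sym set \<Rightarrow> bool" where
  "seq_guess Sig K seq i i' a b \<longleftrightarrow> 1 \<le> i \<and> i \<le> length seq + 1 \<and>
    ((i \<le> length seq \<and> seq ! (i - 1) \<in> a \<and> i' = Suc i \<and> b = a) \<or>
     ((i \<le> length seq \<longrightarrow> seq ! (i - 1) \<notin> a) \<and> a \<subseteq> Prop ` Sig \<and> i' = i \<and>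
      (b = a \<or> (\<exists>I\<in>Kset K seq i. b = a \<union> {Itv I}))))"

lemma KsetE:
  assumes "I \<in> Kset K seq i"
  obtains i' i'' where "I \<in> K" "1 \<le> i'" "i' < i" "i \<le> i''" "i'' \<le> length seq"
    "seq ! (i' - 1) = Itv I" "seq ! (i'' - 1) = Itv I"
  using assms unfolding Kset_def by blast

lemma delta_seq_iff:
  "(q', i') \<in> delta_seq Sig K \<delta> seq (q, i) a \<longleftrightarrow> (\<exists>b. q' \<in> \<delta> q b \<and> seq_guess Sig K seq i i' a b)"
proof -
  have Kset_final: "Kset K seq (Suc (length seq)) = {}" unfolding Kset_def by auto
  consider "1 \<le> i \<and> i \<le> length seq" | "i = length seq + 1" | "\<not> (1 \<le> i \<and> i \<le> length seq + 1)"
    by linarith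
  then show ?thesis
    by cases (auto simp: delta_seq_def seq_guess_def Let_def Kset_final)
qed

lemma seq_guess_alphabet:
  assumes "seq_guess Sig K seq i i' a b" "a \<in> alphabet Sig K"
  shows "b \<in> alphabet Sig K"
proof -
  have "Kset K seq i \<subseteq> K" unfolding Kset_def by auto
  then show ?thesis using assms unfolding seq_guess_def alphabet_def by blast
qed

lemma lang_delta_seq_iff:
  "u \<in> lang Alph (init, 1) (delta_seq Sig K \<delta> seq) (F \<times> {length seq + 1}) \<longleftrightarrow>
   u \<in> lists Alph \<and> (\<exists>w ix. length w = length u \<and> ix 0 = 1 \<and> ix (length u) = length seq + 1 \<and>
      (\<forall>p<length u. seq_guess Sig K seq (ix p) (ix (Suc p)) (u ! p) (w ! p)) \<and>
      reach \<delta> init w \<inter> F \<noteq> {})"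
proof -
  have "reach (delta_seq Sig K \<delta> seq) (init, 1) u \<inter> F \<times> {length seq + 1} \<noteq> {} \<longleftrightarrow>
      (\<exists>q'\<in>F. (q', length seq + 1) \<in> reach (delta_seq Sig K \<delta> seq) (init, 1) u)"
    by blast
  then show ?thesis
    unfolding lang_def mem_Collect_eq
    by (simp only: reach_product_iff[where R = "seq_guess Sig K seq", OF delta_seq_iff]) blast
qed

definition boundary_rank :: "real set set \<Rightarrow> 'p sym set list \<Rightarrow> nat \<Rightarrow> nat" where
  "boundary_rank K w p = card {b \<in> Boundary K w. b < p}"

lemma length_wtype: "cw Sig K w \<Longrightarrow> length (wtype Sig K w) = card (Boundary K w)"
  by (simp add: wtype_eq_map_marker)

lemma
  assumes "cw Sig K w" "b \<in> Boundary K w"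
  shows boundary_rank_less_length_wtype: "boundary_rank K w b < length (wtype Sig K w)"
    and nth_wtype_boundary_rank: "wtype Sig K w ! boundary_rank K w b = marker Sig w b"
proof -
  have fin: "finite (Boundary K w)" using finite_Boundary[OF assms(1)] .
  have "{x \<in> Boundary K w. x < b} \<subset> Boundary K w" using assms(2) by auto
  then show lt: "boundary_rank K w b < length (wtype Sig K w)"
    unfolding boundary_rank_def length_wtype[OF assms(1)] using fin psubset_card_mono by blast
  then show "wtype Sig K w ! boundary_rank K w b = marker Sig w b"
    using nth_sorted_list_of_set_card_less[OF fin assms(2)]
    by (simp add: wtype_eq_map_marker boundary_rank_def)
qed

lemma boundary_rank_le_length_wtype:
  "cw Sig K w \<Longrightarrow> boundary_rank K w p \<le> length (wtype Sig K w)"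
  unfolding boundary_rank_def by (simp add: length_wtype finite_Boundary card_mono)

lemma boundary_rank_length:
  assumes "cw Sig K w" shows "boundary_rank K w (length w) = length (wtype Sig K w)"
proof -
  have "{b \<in> Boundary K w. b < length w} = Boundary K w"
    using Boundary_subset_lessThan[OF assms] by auto
  then show ?thesis by (simp add: boundary_rank_def length_wtype[OF assms])
qed

lemma boundary_rank_Suc:
  "boundary_rank K w (Suc p) =
     (if p \<in> Boundary K w then Suc (boundary_rank K w p) else boundary_rank K w p)"
proof -
  have fin: "finite {b \<in> Boundary K w. b < p}" by simp
  have "{b \<in> Boundary K w. b < Suc p} =
      (if p \<in> Boundary K w then insert p {b \<in> Boundary K w. b < p} else {b \<in> Boundary K w. b < p})"
    by (auto simp: less_Suc_eq)
  then show ?thesis by (simp add: boundary_rank_def card_insert_if[OF fin])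
qed

lemma boundary_rank_strict_mono:
  "f \<in> Boundary K w \<Longrightarrow> f < p \<Longrightarrow> boundary_rank K w f < boundary_rank K w p"
  unfolding boundary_rank_def by (rule psubset_card_mono) auto

lemma boundary_rank_mono: "p \<le> l \<Longrightarrow> boundary_rank K w p \<le> boundary_rank K w l"
  unfolding boundary_rank_def by (rule card_mono) auto

lemma Itv_interior_in_Kset:
  assumes "cw Sig K w" "p < length w" "p \<notin> Boundary K w" "I \<in> K" "Itv I \<in> w ! p"
  shows "I \<in> Kset K (wtype Sig K w) (Suc (boundary_rank K w p))"
proof -
  obtain f where f: "first_pos w I = Some f" "f \<le> p" using first_pos_exists_le assms(2,5) by blast
  obtain l where l: "last_pos w I = Some l" "p \<le> l" using last_pos_exists_ge assms(2,5) by blast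
  have fB: "f \<in> Boundary K w" and lB: "l \<in> Boundary K w"
    using f(1) l(1) assms(4) unfolding Boundary_def by auto
  then have "f < p" "p \<le> l" using f(2) l(2) assms(3) by (auto simp: le_less)
  then have rank: "boundary_rank K w f < boundary_rank K w p" "boundary_rank K w p \<le> boundary_rank K w l"
    using boundary_rank_strict_mono[OF fB] boundary_rank_mono by auto
  have "wtype Sig K w ! boundary_rank K w f = Itv I" "wtype Sig K w ! boundary_rank K w l = Itv I"
    using nth_wtype_boundary_rank[OF assms(1) fB] nth_wtype_boundary_rank[OF assms(1) lB]
      marker_eqI[OF assms(1) first_pos_SomeD(1,2)[OF f(1)]]
      marker_eqI[OF assms(1) last_pos_SomeD(1,2)[OF l(1)]]
    by auto
  then show ?thesis
    unfolding Kset_def using assms(4) rank boundary_rank_less_length_wtype[OF assms(1) lB]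
    by (intro CollectI conjI exI[of _ "Suc (boundary_rank K w f)"] exI[of _ "Suc (boundary_rank K w l)"])
      auto
qed

lemma seq_guess_Norm:
  assumes "cw Sig K w" "p < length w"
  shows "seq_guess Sig K (wtype Sig K w) (Suc (boundary_rank K w p)) (Suc (boundary_rank K w (Suc p)))
           (Norm Sig K w ! p) (w ! p)"
proof (cases "p \<in> Boundary K w")
  case True
  then show ?thesis
    using boundary_rank_less_length_wtype[OF assms(1) True] nth_wtype_boundary_rank[OF assms(1) True]
      marker_Boundary(1)[OF assms(1) True] Norm_nth_Boundary[OF assms(1) True] boundary_rank_Suc[of K w p]
    by (simp add: seq_guess_def)
next
  case not_Boundary: False
  let ?seq = "wtype Sig K w" and ?i = "Suc (boundary_rank K w p)"
  have N: "Norm Sig K w ! p = w ! p \<inter> Prop ` Sig" using Norm_nth_not_Boundary[OF assms not_Boundary] .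
  have "?seq ! (?i - 1) \<notin> Norm Sig K w ! p" if "?i \<le> length ?seq"
  proof -
    have "is_type Sig K ?seq" using assms(1) unfolding is_type_def by blast
    then show ?thesis using is_type_not_Prop[of Sig K ?seq "?seq ! (?i - 1)"] that N by auto
  qed
  moreover have "w ! p = Norm Sig K w ! p \<or> (\<exists>I\<in>Kset K ?seq ?i. w ! p = Norm Sig K w ! p \<union> {Itv I})"
  proof (cases "w ! p \<subseteq> Prop ` Sig")
    case True
    then show ?thesis using N by auto
  next
    case False
    then obtain x where x: "x \<in> w ! p" "x \<notin> Prop ` Sig" by blast
    have "Anch \<notin> w ! p" using anch_pos_unique[OF assms] not_Boundary unfolding Boundary_def by auto
    then obtain I where I: "I \<in> K" "x = Itv I" using cw_nth_subset[OF assms] x by auto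
    have "y = Itv I" if "y \<in> w ! p" "y \<notin> Prop ` Sig" for y
      using cw_non_Prop_unique[OF assms that(1) x(1) that(2) x(2)] I(2) by simp
    then have "w ! p = Norm Sig K w ! p \<union> {Itv I}" using N x I by blast
    then show ?thesis using Itv_interior_in_Kset[OF assms not_Boundary I(1)] x I by auto
  qed
  ultimately show ?thesis
    using N boundary_rank_Suc[of K w p] not_Boundary boundary_rank_le_length_wtype[OF assms(1), of p]
    by (auto simp: seq_guess_def)
qed

lemma Norm_in_lang_delta_seq:
  assumes "cw Sig K w" "w \<in> lang (alphabet Sig K) init \<delta> F"
  shows "Norm Sig K w \<in> lang (alphabet Sig K) (init, 1) (delta_seq Sig K \<delta> (wtype Sig K w))
           (F \<times> {length (wtype Sig K w) + 1})"
proof -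
  let ?ix = "\<lambda>p. Suc (boundary_rank K w p)"
  have "?ix 0 = 1" "?ix (length w) = length (wtype Sig K w) + 1"
    using boundary_rank_length[OF assms(1)] by (simp_all add: boundary_rank_def)
  moreover have "reach \<delta> init w \<inter> F \<noteq> {}" using assms(2) by (simp add: lang_def)
  ultimately show ?thesis
    unfolding lang_delta_seq_iff using Norm_in_lists[OF assms(1)] seq_guess_Norm[OF assms(1)]
    by (intro conjI exI[of _ w] exI[of _ ?ix]) auto
qed

locale seq_run =
  fixes Sig :: "'p set" and K :: "real set set" and seq :: "'p sym list"
    and u w :: "'p sym set list" and ix :: "nat \<Rightarrow> nat"
  assumes seq_is_type: "is_type Sig K seq" and w_cw: "cw Sig K w" and length_eq: "length w = length u"
    and ix_0: "ix 0 = 1" and ix_length: "ix (length u) = length seq + 1"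
    and run_step: "p < length u \<Longrightarrow> seq_guess Sig K seq (ix p) (ix (Suc p)) (u ! p) (w ! p)"
begin

definition advances :: "nat set" where
  "advances = {q. q < length u \<and> ix (Suc q) = Suc (ix q)}"

lemma advances_less_length: "q \<in> advances \<Longrightarrow> q < length u"
  unfolding advances_def by simp

lemma ix_step: "p < length u \<Longrightarrow> ix (Suc p) = ix p \<or> ix (Suc p) = Suc (ix p)"
  using run_step unfolding seq_guess_def by blast

lemma ix_eq_card_advances: "p \<le> length u \<Longrightarrow> ix p = Suc (card {q \<in> advances. q < p})"
proof -
  assume p: "p \<le> length u"
  have "ix p = ix 0 + card {q. q < p \<and> ix (Suc q) = Suc (ix q)}"
    using ix_step p by (intro counter_eq_card_increments) simp
  moreover have "{q. q < p \<and> ix (Suc q) = Suc (ix q)} = {q \<in> advances. q < p}"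
    using p unfolding advances_def by auto
  ultimately show ?thesis using ix_0 by simp
qed

lemma card_advances: "card advances = length seq"
proof -
  have "{q \<in> advances. q < length u} = advances" using advances_less_length by blast
  then show ?thesis using ix_eq_card_advances[of "length u"] ix_length by simp
qed

lemma ix_mono: "p \<le> p' \<Longrightarrow> p' \<le> length u \<Longrightarrow> ix p \<le> ix p'"
proof -
  assume "p \<le> p'" "p' \<le> length u"
  moreover have "card {q \<in> advances. q < p} \<le> card {q \<in> advances. q < p'}"
    using \<open>p \<le> p'\<close> by (intro card_mono) auto
  ultimately show ?thesis using ix_eq_card_advances[of p] ix_eq_card_advances[of p'] by simp
qed

lemma ix_advance_less: "q \<in> advances \<Longrightarrow> q < p \<Longrightarrow> p \<le> length u \<Longrightarrow> ix q < ix p"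
  using ix_mono[of "Suc q" p] unfolding advances_def by simp

lemma guess_advance:
  "q \<in> advances \<Longrightarrow> 1 \<le> ix q \<and> ix q \<le> length seq \<and> seq ! (ix q - 1) \<in> u ! q \<and> w ! q = u ! q"
  using run_step[of q] unfolding advances_def seq_guess_def by auto

lemma guess_stay:
  "p < length u \<Longrightarrow> p \<notin> advances \<Longrightarrow>
     u ! p \<subseteq> Prop ` Sig \<and> (w ! p = u ! p \<or> (\<exists>I\<in>Kset K seq (ix p). w ! p = u ! p \<union> {Itv I}))"
  using run_step[of p] unfolding advances_def seq_guess_def by auto

lemma advance_with_ix: "1 \<le> k \<Longrightarrow> k \<le> length seq \<Longrightarrow> \<exists>q\<in>advances. ix q = k"
  using exists_unit_step_through[of ix k "length u"] ix_0 ix_length ix_step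
  unfolding advances_def by fastforce

lemma seq_at_advance:
  assumes "q \<in> advances" shows "seq ! (ix q - 1) \<in> w ! q" "seq ! (ix q - 1) \<notin> Prop ` Sig"
proof -
  have "ix q - 1 < length seq" using guess_advance[OF assms] by linarith
  then show "seq ! (ix q - 1) \<in> w ! q" "seq ! (ix q - 1) \<notin> Prop ` Sig"
    using guess_advance[OF assms] is_type_not_Prop[OF seq_is_type] nth_mem by auto
qed

lemma Itv_at_advance: "q \<in> advances \<Longrightarrow> Itv I \<in> w ! q \<Longrightarrow> seq ! (ix q - 1) = Itv I"
  using cw_non_Prop_unique[OF w_cw _ seq_at_advance(1) _ seq_at_advance(2)] advances_less_length length_eq
  by force

lemma Itv_at_stay:
  assumes "p < length u" "p \<notin> advances" "Itv I \<in> w ! p"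
  shows "I \<in> Kset K seq (ix p)"
  using guess_stay[OF assms(1,2)] assms(3) by auto

lemma Itv_occurs_before:
  assumes "p < length u" "Itv I \<in> w ! p"
  shows "\<exists>a. seq ! a = Itv I \<and> Suc a \<le> ix p \<and> (p \<notin> advances \<longrightarrow> Suc a < ix p)"
proof (cases "p \<in> advances")
  case True
  have "1 \<le> ix p" "ix p \<le> length seq" using guess_advance[OF True] by auto
  then show ?thesis using Itv_at_advance[OF True assms(2)] True by (intro exI[of _ "ix p - 1"]) simp
next
  case False
  from Itv_at_stay[OF assms(1) False assms(2)] obtain i' i'' where
    "I \<in> K" "1 \<le> i'" "i' < ix p" "ix p \<le> i''" "i'' \<le> length seq"
    "seq ! (i' - 1) = Itv I" "seq ! (i'' - 1) = Itv I"
    by (rule KsetE)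
  then show ?thesis using False by (intro exI[of _ "i' - 1"]) auto
qed

lemma Itv_occurs_after:
  assumes "p < length u" "Itv I \<in> w ! p"
  shows "\<exists>b<length seq. seq ! b = Itv I \<and> ix p \<le> Suc b"
proof (cases "p \<in> advances")
  case True
  have "1 \<le> ix p" "ix p \<le> length seq" using guess_advance[OF True] by auto
  then have "ix p - 1 < length seq" "ix p \<le> Suc (ix p - 1)" by linarith+
  with Itv_at_advance[OF True assms(2)] show ?thesis by blast
next
  case False
  from Itv_at_stay[OF assms(1) False assms(2)] obtain i' i'' where
    "I \<in> K" "1 \<le> i'" "i' < ix p" "ix p \<le> i''" "i'' \<le> length seq"
    "seq ! (i' - 1) = Itv I" "seq ! (i'' - 1) = Itv I"
    by (rule KsetE)
  then have "i'' - 1 < length seq" "ix p \<le> Suc (i'' - 1)" "seq ! (i'' - 1) = Itv I" by auto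
  then show ?thesis by blast
qed

lemma Itv_occurs_before_advance:
  assumes "p < q" "q \<in> advances" "Itv I \<in> w ! p"
  shows "\<exists>a. seq ! a = Itv I \<and> Suc a < ix q"
proof -
  have q: "q < length u" using advances_less_length[OF assms(2)] .
  obtain a where a: "seq ! a = Itv I" "Suc a \<le> ix p" "p \<notin> advances \<longrightarrow> Suc a < ix p"
    using Itv_occurs_before assms(1,3) q by (meson order.strict_trans)
  have "ix p \<le> ix q" "p \<in> advances \<longrightarrow> ix p < ix q"
    using ix_mono ix_advance_less assms(1) q by auto
  then show ?thesis using a by (cases "p \<in> advances") auto
qed

lemma Itv_occurs_after_advance:
  assumes "q < p" "p < length u" "q \<in> advances" "Itv I \<in> w ! p"
  shows "\<exists>b<length seq. seq ! b = Itv I \<and> ix q \<le> b"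
  using Itv_occurs_after[OF assms(2,4)] ix_advance_less[OF assms(3,1)] assms(2) by fastforce

text \<open>An interval read at an advance strictly between its first and last occurrence in \<open>w\<close>
  would occur three times in \<open>seq\<close>.\<close>
lemma advances_subset_Boundary: "advances \<subseteq> Boundary K w"
proof
  fix q assume q: "q \<in> advances"
  have qw: "q < length w" using advances_less_length[OF q] length_eq by simp
  let ?c = "seq ! (ix q - 1)"
  have "?c \<in> Itv ` K \<union> {Anch}" using seq_at_advance[OF q] cw_nth_subset[OF w_cw qw] by blast
  then consider "?c = Anch" | I where "I \<in> K" "?c = Itv I" by blast
  then show "q \<in> Boundary K w"
  proof cases
    case 1
    then show ?thesis
      using anch_pos_unique[OF w_cw qw] seq_at_advance(1)[OF q] unfolding Boundary_def by simp
  next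
    case (2 I)
    have Itv_q: "Itv I \<in> w ! q" using seq_at_advance(1)[OF q] 2(2) by simp
    obtain f where f: "first_pos w I = Some f" "f \<le> q" using first_pos_exists_le[OF qw Itv_q] by blast
    obtain l where l: "last_pos w I = Some l" "q \<le> l" using last_pos_exists_ge[OF qw Itv_q] by blast
    show ?thesis
    proof (rule ccontr)
      assume "q \<notin> Boundary K w"
      then have "f < q" "q < l" using f l 2(1) unfolding Boundary_def by (auto simp: le_less)
      then obtain a b where "seq ! a = Itv I" "Suc a < ix q" "b < length seq" "seq ! b = Itv I" "ix q \<le> b"
        using Itv_occurs_before_advance[OF _ q first_pos_SomeD(2)[OF f(1)]]
          Itv_occurs_after_advance[OF _ _ q last_pos_SomeD(2)[OF l(1)]]
          last_pos_SomeD(1)[OF l(1)] length_eq by metis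
      then show False
        using is_type_Itv_at_most_twice[OF seq_is_type, of a "ix q - 1" b I] 2(2) by simp
    qed
  qed
qed

text \<open>At a boundary position where the phase stays, the enclosing occurrences of its interval in
  \<open>seq\<close> are read at advances before and after it, contradicting first and last.\<close>
lemma Boundary_subset_advances: "Boundary K w \<subseteq> advances"
proof
  fix p assume pB: "p \<in> Boundary K w"
  have p: "p < length u" using Boundary_subset_lessThan[OF w_cw] pB length_eq by auto
  show "p \<in> advances"
  proof (rule ccontr)
    assume stay: "p \<notin> advances"
    from pB show False
    proof (cases rule: BoundaryE)
      case 1
      then show False
        using guess_stay[OF p stay] Anch_in_anch_pos[OF w_cw] by auto
    next
      case (2 I)
      have Itv_p: "Itv I \<in> w ! p" using 2(2) first_pos_SomeD(2) last_pos_SomeD(2) by blast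
      from 2(2) show False
      proof
        assume first: "first_pos w I = Some p"
        obtain a where a: "seq ! a = Itv I" "Suc a < ix p"
          using Itv_occurs_before[OF p Itv_p] stay by blast
        then obtain q where q: "q \<in> advances" "ix q = Suc a"
          using advance_with_ix[of "Suc a"] ix_mono[of p "length u"] ix_length p by auto
        then have "q < p" using ix_mono[of p q] advances_less_length a(2) by fastforce
        then show False using first_pos_SomeD(3)[OF first] Itv_at_advance q a(1)
          seq_at_advance(1)[OF q(1)] by auto
      next
        assume last: "last_pos w I = Some p"
        obtain b where b: "b < length seq" "seq ! b = Itv I" "ix p \<le> Suc b"
          using Itv_occurs_after[OF p Itv_p] by blast
        then obtain q where q: "q \<in> advances" "ix q = Suc b" using advance_with_ix[of "Suc b"] by auto
        then have "p < q" using ix_advance_less[OF q(1), of p] p stay b(3)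
          by (cases p q rule: linorder_cases) auto
        moreover have "q < length w" using advances_less_length[OF q(1)] length_eq by simp
        ultimately show False using last_pos_SomeD(3)[OF last] seq_at_advance(1)[OF q(1)] q b(2)
          by auto
      qed
    qed
  qed
qed

lemma Boundary_eq_advances: "Boundary K w = advances"
  using advances_subset_Boundary Boundary_subset_advances by blast

lemma wtype_eq: "wtype Sig K w = seq"
proof (rule nth_equalityI)
  show "length (wtype Sig K w) = length seq"
    using length_wtype[OF w_cw] Boundary_eq_advances card_advances by simp
  fix k assume "k < length (wtype Sig K w)"
  then have k: "k < length seq" using length_wtype[OF w_cw] Boundary_eq_advances card_advances by simp
  then obtain q where q: "q \<in> advances" "ix q = Suc k" using advance_with_ix[of "Suc k"] by auto
  have "card {x \<in> advances. x < q} = k"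
    using ix_eq_card_advances[of q] advances_less_length[OF q(1)] q(2) by simp
  then have "sorted_list_of_set (Boundary K w) ! k = q"
    using nth_sorted_list_of_set_card_less[of advances q] Boundary_eq_advances q(1)
      finite_Boundary[OF w_cw] by simp
  moreover have "marker Sig w q = seq ! k"
    using marker_eqI[OF w_cw _ seq_at_advance[OF q(1)]] advances_less_length[OF q(1)] length_eq q(2)
    by simp
  ultimately show "wtype Sig K w ! k = seq ! k"
    using k length_wtype[OF w_cw] Boundary_eq_advances card_advances by (simp add: wtype_eq_map_marker)
qed

lemma Norm_eq: "Norm Sig K w = u"
proof (rule nth_equalityI)
  show "length (Norm Sig K w) = length u" using length_eq by simp
  fix p assume "p < length (Norm Sig K w)"
  then have p: "p < length u" and pw: "p < length w" using length_eq by auto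
  show "Norm Sig K w ! p = u ! p"
  proof (cases "p \<in> advances")
    case True
    then show ?thesis using Norm_nth_Boundary[OF w_cw] Boundary_eq_advances guess_advance by simp
  next
    case False
    then have "w ! p \<inter> Prop ` Sig = u ! p" using guess_stay[OF p] by auto
    then show ?thesis using Norm_nth_not_Boundary[OF w_cw pw] False Boundary_eq_advances by simp
  qed
qed

end

lemma lang_delta_seq_subset_Norm:
  assumes "is_type Sig K seq" "lang (alphabet Sig K) init \<delta> F \<subseteq> {w. cw Sig K w}"
    and "u \<in> lang (alphabet Sig K) (init, 1) (delta_seq Sig K \<delta> seq) (F \<times> {length seq + 1})"
  shows "u \<in> Norm Sig K ` (lang (alphabet Sig K) init \<delta> F \<inter> W_seq Sig K seq)"
proof -
  obtain w ix where u: "u \<in> lists (alphabet Sig K)" and w: "length w = length u" "ix 0 = 1"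
      "ix (length u) = length seq + 1"
    and run_steps: "\<forall>p<length u. seq_guess Sig K seq (ix p) (ix (Suc p)) (u ! p) (w ! p)"
    and accept: "reach \<delta> init w \<inter> F \<noteq> {}"
    using assms(3) unfolding lang_delta_seq_iff by blast
  have "w \<in> lists (alphabet Sig K)"
    using u w(1) run_steps seq_guess_alphabet by (fastforce simp: in_set_conv_nth)
  then have w_lang: "w \<in> lang (alphabet Sig K) init \<delta> F" using accept by (simp add: lang_def)
  then interpret seq_run Sig K seq u w ix
    using assms(1,2) w run_steps by unfold_locales auto
  have "w \<in> W_seq Sig K seq" using w_cw wtype_eq by (simp add: W_seq_def)
  then show ?thesis using w_lang Norm_eq by blast
qed

theorem lemma2:
  fixes Sig :: "'p set" and K :: "real set set" and Q :: "'q set" and init :: 'q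
    and \<delta> :: "'q \<Rightarrow> 'p sym set \<Rightarrow> 'q set" and F :: "'q set"
  assumes "finite Sig" and "finite K" and "K \<subseteq> I_int"
    and "is_nfa Q init (alphabet Sig K) \<delta> F"
    and "lang (alphabet Sig K) init \<delta> F \<subseteq> {w. cw Sig K w}"
  shows "(\<forall>seq. is_type Sig K seq \<longrightarrow>
            lang (alphabet Sig K) (init, 1) (delta_seq Sig K \<delta> seq) (F \<times> {length seq + 1})
            = Norm Sig K ` (lang (alphabet Sig K) init \<delta> F \<inter> W_seq Sig K seq))
       \<and> (\<Union>seq\<in>{seq. is_type Sig K seq}.
            lang (alphabet Sig K) (init, 1) (delta_seq Sig K \<delta> seq) (F \<times> {length seq + 1}))
         = Norm Sig K ` lang (alphabet Sig K) init \<delta> F"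
proof -
  let ?L = "lang (alphabet Sig K) init \<delta> F"
    and ?L_seq = "\<lambda>seq. lang (alphabet Sig K) (init, 1) (delta_seq Sig K \<delta> seq) (F \<times> {length seq + 1})"
  have per_type: "?L_seq seq = Norm Sig K ` (?L \<inter> W_seq Sig K seq)" if "is_type Sig K seq" for seq
  proof
    show "?L_seq seq \<subseteq> Norm Sig K ` (?L \<inter> W_seq Sig K seq)"
      using lang_delta_seq_subset_Norm[OF that assms(5)] by blast
    show "Norm Sig K ` (?L \<inter> W_seq Sig K seq) \<subseteq> ?L_seq seq"
      using Norm_in_lang_delta_seq by (auto simp: W_seq_def)
  qed
  moreover have "Norm Sig K w \<in> (\<Union>seq\<in>{seq. is_type Sig K seq}. ?L_seq seq)" if "w \<in> ?L" for w
  proof -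
    have "cw Sig K w" using that assms(5) by blast
    then show ?thesis using Norm_in_lang_delta_seq[OF _ that] unfolding is_type_def by blast
  qed
  ultimately show ?thesis by blast
qed

end
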